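(* Consider a hierarchical clustering of a sensor network with levels $1,2,\dots,T$. For each level $i$, let $C_i$ be the (finite, nonempty) collection of clusters at level $i$, and for $l \in C_i$ let $N_i^{(l)}$ be the number of nodes in cluster $l$ at level $i$. Assume that every cluster size satisfies $N_i^{(l)} > 3$, and that cluster sizes strictly increase with level: for all levels $j < i$, all $l \in C_j$ and all $p \in C_i$, $N_j^{(l)} < N_i^{(p)}$. Let $K_T > 0$ be the sparsity of the whole data field, and for each level $i$ define the threshold $$K_{i\_T} = \max_{l \in C_i} \frac{N_i^{(l)}}{\log_2 N_i^{(l)}}.$$ In the HDACS scheme, the cluster head of cluster $l$ at level $i$ would transmit $M_i^{(l)} = K_T \log_2 N_i^{(l)}$ compressive-sensing measurements, and it is called CS-disabled if $M_i^{(l)} > N_i^{(l)}$ (in which case it transmits its $N_i^{(l)}$ raw data values instead). If $K_T > K_{i\_T}$ for some level $i$, then every cluster at every level $j \le i$ is CS-disabled, i.e. $K_T \log_2 N_j^{(l)} > N_j^{(l)}$ for all $j \le i$ and all $l \in C_j$.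
   Context: Logarithms are base 2. The sparsity $K_T$ denotes the number of significant (nonzero) coefficients of the entire data field in the transform domain; in HDACS this single global value is used at every cluster to determine the number of measurements $M = K_T \log_2 N$, where $N$ is the local cluster size. *)

theory Defs
  imports Complex_Main
begin

definition threshold :: "(nat \<Rightarrow> 'c set) \<Rightarrow> (nat \<Rightarrow> 'c \<Rightarrow> nat) \<Rightarrow> nat \<Rightarrow> real" where
  "threshold C N i = Max ((\<lambda>l. real (N i l) / log 2 (real (N i l))) ` C i)"

definition measurements :: "real \<Rightarrow> (nat \<Rightarrow> 'c \<Rightarrow> nat) \<Rightarrow> nat \<Rightarrow> 'c \<Rightarrow> real" where
  "measurements KT N i l = KT * log 2 (real (N i l))"

definition cs_disabled :: "real \<Rightarrow> (nat \<Rightarrow> 'c \<Rightarrow> nat) \<Rightarrow> nat \<Rightarrow> 'c \<Rightarrow> bool" where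
  "cs_disabled KT N i l \<longleftrightarrow> measurements KT N i l > real (N i l)"

end

theory Submission
  imports Defs
begin

text \<open>Since \<open>x / log 2 x\<close> is nondecreasing for \<open>x \<ge> e\<close> and cluster sizes grow with
  the level, the ratio \<open>N / log 2 N\<close> of any cluster at a level \<open>j \<le> i\<close> is at most that of
  some cluster at level \<open>i\<close>, hence at most the threshold, which is below \<open>KT\<close>; multiplying
  by the positive logarithm gives \<open>N < KT * log 2 N\<close>.\<close>

lemma divide_log_mono:
  fixes b x y :: real
  assumes "1 < b" "exp 1 \<le> x" "x \<le> y"
  shows "x / log b x \<le> y / log b y"
proof -
  have "0 < x" "0 < y"
    using assms exp_gt_zero[of 1] by linarith+
  then have pos: "0 < x" "0 < ln x" "0 < y" "0 < ln y"
    using assms ln_ge_iff[of x 1] ln_ge_iff[of y 1] by (auto simp: less_le_trans[OF zero_less_one])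
  have "ln y / y \<le> ln x / x"
    using ln_x_over_x_mono assms(2,3) .
  then have "x / ln x \<le> y / ln y"
    using pos le_imp_inverse_le[of "ln y / y" "ln x / x"] by simp
  then have "ln b * (x / ln x) \<le> ln b * (y / ln y)"
    using assms(1) by (intro mult_left_mono) auto
  then show ?thesis
    by (simp add: log_def mult.commute)
qed

lemma ratio_le_threshold:
  assumes "finite (C i)" "l \<in> C i"
  shows "real (N i l) / log 2 (real (N i l)) \<le> threshold C N i"
  unfolding threshold_def using assms by (intro Max_ge) auto

lemma cs_disabled_iff_ratio_less:
  assumes "1 < N i l"
  shows "cs_disabled KT N i l \<longleftrightarrow> real (N i l) / log 2 (real (N i l)) < KT"
proof -
  have "0 < log 2 (real (N i l))"
    using assms by simp
  then show ?thesis
    by (simp add: cs_disabled_def measurements_def divide_less_eq mult.commute)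
qed

theorem proposition1:
  fixes T :: nat and C :: "nat \<Rightarrow> 'c set" and N :: "nat \<Rightarrow> 'c \<Rightarrow> nat"
    and KT :: real and i :: nat
  assumes fin: "\<And>i. i \<in> {1..T} \<Longrightarrow> finite (C i)"
    and ne: "\<And>i. i \<in> {1..T} \<Longrightarrow> C i \<noteq> {}"
    and big: "\<And>i l. i \<in> {1..T} \<Longrightarrow> l \<in> C i \<Longrightarrow> N i l > 3"
    and incr: "\<And>i j l p. i \<in> {1..T} \<Longrightarrow> j \<in> {1..T} \<Longrightarrow> j < i \<Longrightarrow> l \<in> C j \<Longrightarrow> p \<in> C i
                 \<Longrightarrow> N j l < N i p"
    and KT_pos: "KT > 0"
    and i: "i \<in> {1..T}"
    and exceed: "KT > threshold C N i"
  shows "\<forall>j \<in> {1..i}. \<forall>l \<in> C j. cs_disabled KT N j l"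
proof (intro ballI)
  fix j l assume j: "j \<in> {1..i}" and l: "l \<in> C j"
  have jT: "j \<in> {1..T}" using j i by auto
  obtain q where q: "q \<in> C i" "N j l \<le> N i q"
  proof (cases "j = i")
    case False
    obtain p where "p \<in> C i" using ne[OF i] by blast
    then show ?thesis using that incr[OF i jT _ l] j False by (auto intro: less_imp_le)
  qed (use l that in auto)
  have "exp 1 \<le> real (N j l)"
    using big[OF jT l] exp_le by linarith
  then have "real (N j l) / log 2 (real (N j l)) \<le> real (N i q) / log 2 (real (N i q))"
    using divide_log_mono q(2) by simp
  also have "\<dots> \<le> threshold C N i"
    using ratio_le_threshold fin[OF i] q(1) .
  finally show "cs_disabled KT N j l"
    using cs_disabled_iff_ratio_less[of N j l KT] big[OF jT l] exceed by simp
qed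

end
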